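(* Let $p$ be an odd prime and $\ell\geq 1$ an integer. Then for every $\tau\in\mathbb{H}$, $$\prod_{j=0}^{\ell}\ \prod_{\substack{0\leq v<p^j\\ \gcd(p^{\ell-j},v,p^j)=1}}\theta_3\Big(\frac{p^{\ell-j}\tau+2v}{p^j}\Big)=\theta_3^{\psi(p^\ell)}(\tau).$$
   Context: $\mathbb{H}=\{\tau\in\mathbb{C}:\Im(\tau)>0\}$. For $\tau\in\mathbb{H}$, $\theta_3(\tau)=1+2\sum_{\nu=1}^{\infty}e^{\pi i\nu^2\tau}$. For a positive integer $n$, $\psi(n)=n\prod_{p\mid n}(1+1/p)$, the product over primes dividing $n$; in particular $\psi(p^\ell)=p^\ell+p^{\ell-1}$. *)

theory Defs
  imports "HOL-Analysis.Analysis" "HOL-Computational_Algebra.Primes"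
begin

definition theta3 :: "complex \<Rightarrow> complex" where
  "theta3 \<tau> = 1 + 2 * (\<Sum>\<nu>. exp (complex_of_real pi * \<i> * of_nat ((Suc \<nu>)^2) * \<tau>))"

definition dedekind_psi :: "nat \<Rightarrow> nat" where
  "dedekind_psi n = nat \<lfloor>(of_nat n :: rat) * (\<Prod>p\<in>prime_factors n. 1 + 1 / of_nat p)\<rfloor>"

end

theory Submission
  imports Defs "HOL-Computational_Algebra.Polynomial"
begin

text \<open>
  Put q = exp(\<pi> i \<tau>). By the Jacobi triple product, \<theta>(\<tau>) is the product over k \<ge> 1 of
  f_k(q^k), where f_k(w) = 1 - w for even k and f_k(w) = (1 + w)^2 for odd k. Since p is odd,
  f_(pk) = f_k, and the product of f_k((\<zeta>^u w)^k) over the p-th roots of unity \<zeta>^u equals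
  f_k(w^(pk)) when p does not divide k and f_k(w^k)^p when it does. Comparing products gives
  the level p relation \<theta>(p\<tau>) \<Prod>_(u<p) \<theta>((\<tau> + 2u)/p) = \<theta>(\<tau>)^(p+1).

  Let A_l(\<tau>) be the product of \<theta>((p^(l-j) \<tau> + 2v)/p^j) over all j \<le> l and v < p^j.
  Regrouping the factors of A_(l+1) at p\<tau> and at the (\<tau> + 2u)/p shows
  A_(l+2)(\<tau>) A_l(\<tau>)^p = A_(l+1)(p\<tau>) \<Prod>_u A_(l+1)((\<tau> + 2u)/p), so the level p relation
  yields A_l = \<theta>^(1 + p + ... + p^l). The non-primitive factors of A_l are exactly the
  factors of A_(l-2), hence the primitive product is \<theta>^(p^l + p^(l-1)) = \<theta>^\<psi>(p^l).
\<close>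

context comm_monoid_set
begin

lemma lessThan_add:
  fixes m n :: nat
  shows "F g {..<m + n} = F g {..<m} \<^bold>* F (\<lambda>i. g (m + i)) {..<n}"
  by (induction n) (simp_all add: ac_simps)

lemma lessThan_mult:
  fixes m n :: nat
  shows "F g {..<m * n} = F (\<lambda>i. F (\<lambda>j. g (i * n + j)) {..<n}) {..<m}"
proof (induction m)
  case (Suc m)
  have "F g {..<Suc m * n} = F g {..<m * n} \<^bold>* F (\<lambda>j. g (m * n + j)) {..<n}"
    using lessThan_add[of g "m * n" n] by (simp add: add.commute)
  with Suc.IH show ?case by (simp add: commute)
qed simp

end

lemma Suc_choose_two: "Suc k choose 2 = (k choose 2) + k"
  by (simp add: numeral_2_eq_2)

lemma sum_powers_Suc: "(\<Sum>i\<le>Suc k. p^i) = 1 + p * (\<Sum>i\<le>k. (p::nat)^i)"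
  by (simp add: sum.atMost_Suc_shift sum_distrib_left del: sum.atMost_Suc)

lemma prod_lessThan_shift_periodic:
  fixes g :: "nat \<Rightarrow> 'a::comm_monoid_mult"
  assumes periodic: "\<And>v. g (v + P) = g v"
  shows "(\<Prod>v<P. g (c + v)) = (\<Prod>v<P. g v)"
proof (induction c)
  case (Suc c)
  show ?case
  proof (cases P)
    case (Suc P')
    have "(\<Prod>v<P. g (Suc c + v)) = (\<Prod>v<P'. g (c + Suc v)) * g (c + P)"
      by (simp add: Suc)
    also have "g (c + P) = g c"
      using periodic[of c] by (simp add: add.commute)
    also have "(\<Prod>v<P'. g (c + Suc v)) * g c = (\<Prod>v<P. g (c + v))"
      by (simp only: Suc prod.lessThan_Suc_shift add_0_right mult.commute)
    finally show ?thesis using Suc.IH by simp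
  qed simp
qed simp

lemma LIMSEQ_prod_lessThan_prodinf:
  fixes f :: "nat \<Rightarrow> 'a::{real_normed_field,banach}"
  assumes "summable (\<lambda>i. norm (f i - 1))" "\<And>i. f i \<noteq> 0"
  shows "(\<lambda>n. \<Prod>i<n. f i) \<longlonglongrightarrow> prodinf f" "prodinf f \<noteq> 0"
proof -
  have conv: "convergent_prod f"
    using assms(1) by (intro abs_convergent_prod_imp_convergent_prod summable_imp_abs_convergent_prod)
  show "(\<lambda>n. \<Prod>i<n. f i) \<longlonglongrightarrow> prodinf f"
    using convergent_prod_LIMSEQ[OF conv] LIMSEQ_lessThan_iff_atMost[of "prod f"] by simp
  show "prodinf f \<noteq> 0"
    using prodinf_nonzero[OF conv assms(2)] .
qed

section \<open>Roots of unity\<close>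

lemma prod_diff_powers_root_unity:
  fixes \<omega> w :: "'a::idom"
  assumes n: "n > 0" and \<omega>: "\<omega> ^ n = 1" and inj: "inj_on (\<lambda>u. \<omega> ^ u) {..<n}"
  shows "(\<Prod>u<n. w - \<omega> ^ u) = w ^ n - 1"
proof -
  define P where "P = (\<Prod>u<n. [:- (\<omega> ^ u), 1:])"
  define Q :: "'a poly" where "Q = monom 1 n - 1"
  have deg_P: "degree P = n"
    unfolding P_def by (subst degree_prod_eq_sum_degree) auto
  have "P = Q"
  proof (rule poly_eqI_degree_lead_coeff[of P n Q "(\<lambda>u. \<omega> ^ u) ` {..<n}"])
    have "coeff P n = lead_coeff P" using deg_P by simp
    also have "\<dots> = 1" unfolding P_def lead_coeff_prod by simp
    finally show "coeff P n = coeff Q n"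
      using n by (simp add: Q_def)
    show "degree Q \<le> n"
      unfolding Q_def by (rule order.trans[OF degree_diff_le_max]) (simp add: degree_monom_le)
    show "n \<le> card ((\<lambda>u. \<omega> ^ u) ` {..<n})"
      using inj by (simp add: card_image)
    fix z assume "z \<in> (\<lambda>u. \<omega> ^ u) ` {..<n}"
    then obtain u where "u < n" "z = \<omega> ^ u" by auto
    moreover from this have "z ^ n = 1"
      using \<omega> by (metis mult.commute power_mult power_one)
    ultimately show "poly P z = poly Q z"
      unfolding P_def Q_def poly_prod by (auto simp: poly_monom intro!: prod_zero)
  qed (use deg_P in simp)
  then have "poly P w = poly Q w" by simp
  then show ?thesis by (simp add: P_def Q_def poly_prod poly_monom)
qed

definition root_unity :: "nat \<Rightarrow> complex" where
  "root_unity n = exp (2 * of_real pi * \<i> / of_nat n)"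

lemma root_unity_power: "root_unity n ^ k = exp (2 * of_real pi * \<i> * of_nat k / of_nat n)"
  unfolding root_unity_def exp_of_nat_mult[symmetric] by (simp add: field_simps)

lemma root_unity_nonzero [simp]: "root_unity n \<noteq> 0"
  by (simp add: root_unity_def)

lemma norm_root_unity [simp]: "norm (root_unity n) = 1"
  by (simp add: root_unity_def norm_exp_eq_Re)

lemma root_unity_power_eq_iff:
  "n > 0 \<Longrightarrow> root_unity n ^ i = root_unity n ^ j \<longleftrightarrow> i mod n = j mod n"
  unfolding root_unity_power by (rule complex_root_unity_eq) simp

lemma root_unity_power_eq_1_iff: "n > 0 \<Longrightarrow> root_unity n ^ i = 1 \<longleftrightarrow> n dvd i"
  using root_unity_power_eq_iff[of n i 0] by (simp add: dvd_eq_mod_eq_0)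

lemma inj_on_root_unity_power_power:
  assumes p: "prime p" and k: "\<not> p dvd k"
  shows "inj_on (\<lambda>u. (root_unity p ^ k) ^ u) {..<p}"
proof (rule linorder_inj_onI', rule notI)
  fix a b assume ab: "a < b" "b \<in> {..<p}" and eq: "(root_unity p ^ k) ^ a = (root_unity p ^ k) ^ b"
  have "p > 0" using p prime_gt_0_nat by blast
  with eq have "(k * a) mod p = (k * b) mod p"
    by (simp add: root_unity_power_eq_iff flip: power_mult)
  then have "p dvd k * (b - a)"
    using ab mod_eq_dvd_iff_nat[of "k * a" "k * b" p] by (simp add: right_diff_distrib')
  then have "p dvd b - a"
    using p k by (simp add: prime_dvd_mult_iff)
  with ab show False
    by (auto dest: dvd_imp_le)
qed

lemma prod_one_minus_root_unity_twist:
  assumes p: "prime p" and k: "\<not> p dvd k"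
  shows "(\<Prod>u<p. 1 - (root_unity p ^ k) ^ u * w) = 1 - w ^ p"
proof -
  have p0: "p > 0" using p prime_gt_0_nat by blast
  show ?thesis
  proof (cases "w = 0")
    case True
    with p0 show ?thesis by simp
  next
    case False
    have root: "(root_unity p ^ k) ^ p = 1"
      using p0 by (simp add: root_unity_power_eq_1_iff flip: power_mult)
    have "(\<Prod>u<p. 1 - (root_unity p ^ k) ^ u * w) = (\<Prod>u<p. w * (inverse w - (root_unity p ^ k) ^ u))"
      using False by (intro prod.cong) (auto simp: field_simps)
    also have "\<dots> = w ^ p * (inverse w ^ p - 1)"
      by (simp add: prod.distrib prod_diff_powers_root_unity[OF p0 root inj_on_root_unity_power_power[OF p k]])
    also have "\<dots> = 1 - w ^ p"
      using False by (simp add: field_simps power_inverse)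
    finally show ?thesis .
  qed
qed

lemma prod_one_plus_root_unity_twist:
  assumes "prime p" "odd p" "\<not> p dvd k"
  shows "(\<Prod>u<p. 1 + (root_unity p ^ k) ^ u * w) = 1 + w ^ p"
  using prod_one_minus_root_unity_twist[OF assms(1,3), of "- w"] assms(2) by simp

section \<open>q-Pochhammer symbols and Gaussian binomial coefficients\<close>

definition qpoch :: "'a::comm_ring_1 \<Rightarrow> nat \<Rightarrow> 'a" where
  "qpoch t n = (\<Prod>i<n. 1 - t ^ Suc i)"

fun qbinom :: "'a::comm_ring_1 \<Rightarrow> nat \<Rightarrow> nat \<Rightarrow> 'a" where
  "qbinom t 0 0 = 1"
| "qbinom t 0 (Suc k) = 0"
| "qbinom t (Suc m) 0 = 1"
| "qbinom t (Suc m) (Suc k) = qbinom t m k + t ^ Suc k * qbinom t m (Suc k)"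

lemma qbinom_eq_0: "m < k \<Longrightarrow> qbinom t m k = 0"
proof (induction m arbitrary: k)
  case 0 then show ?case by (cases k) auto
next
  case (Suc m) then show ?case by (cases k) auto
qed

lemma qbinom_0_right [simp]: "qbinom t m 0 = 1"
  by (cases m) auto

lemma qpoch_Suc: "qpoch t (Suc n) = qpoch t n * (1 - t ^ Suc n)"
  by (simp add: qpoch_def)

lemma qbinom_mult_qpoch: "k \<le> m \<Longrightarrow> qbinom t m k * qpoch t k * qpoch t (m - k) = qpoch t m"
proof (induction m arbitrary: k)
  case 0 then show ?case by (simp add: qpoch_def)
next
  case (Suc m)
  show ?case
  proof (cases k)
    case 0 then show ?thesis by (simp add: qpoch_def)
  next
    case (Suc j)
    with Suc.prems have j: "j \<le> m" by simp
    have "qbinom t m j * qpoch t (Suc j) * qpoch t (m - j)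
          = (qbinom t m j * qpoch t j * qpoch t (m - j)) * (1 - t ^ Suc j)"
      by (simp only: qpoch_Suc mult_ac)
    then have first: "qbinom t m j * qpoch t (Suc j) * qpoch t (m - j) = qpoch t m * (1 - t ^ Suc j)"
      using Suc.IH[OF j] by simp
    have second: "t ^ Suc j * qbinom t m (Suc j) * qpoch t (Suc j) * qpoch t (m - j)
                  = qpoch t m * (t ^ Suc j - t ^ Suc m)"
    proof (cases "j = m")
      case True then show ?thesis by (simp add: qbinom_eq_0)
    next
      case False
      with j have j': "Suc j \<le> m" by simp
      then have "m - j = Suc (m - Suc j)" by simp
      then have "t ^ Suc j * qbinom t m (Suc j) * qpoch t (Suc j) * qpoch t (m - j)
            = t ^ Suc j * (qbinom t m (Suc j) * qpoch t (Suc j) * qpoch t (m - Suc j)) * (1 - t ^ (m - j))"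
        by (simp add: qpoch_Suc mult_ac)
      also have "\<dots> = qpoch t m * (t ^ Suc j - t ^ (Suc j + (m - j)))"
        using Suc.IH[OF j'] by (simp add: algebra_simps power_add)
      finally show ?thesis using j by simp
    qed
    have "qbinom t (Suc m) k * qpoch t k * qpoch t (Suc m - k)
          = qbinom t m j * qpoch t (Suc j) * qpoch t (m - j)
            + t ^ Suc j * qbinom t m (Suc j) * qpoch t (Suc j) * qpoch t (m - j)"
      by (simp add: Suc algebra_simps)
    also have "\<dots> = qpoch t (Suc m)"
      unfolding first second by (simp add: qpoch_Suc algebra_simps)
    finally show ?thesis .
  qed
qed

lemma cauchy_binomial:
  fixes t z :: "'a::comm_ring_1"
  shows "(\<Prod>i<m. 1 + z * t ^ i) = (\<Sum>k\<le>m. qbinom t m k * t ^ (k choose 2) * z ^ k)"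
proof (induction m arbitrary: z)
  case 0 then show ?case by (simp add: numeral_2_eq_2)
next
  case (Suc m)
  define a where "a k = qbinom t m k * t ^ (k choose 2) * (z * t) ^ k" for k
  have "(\<Prod>i<Suc m. 1 + z * t ^ i) = (1 + z) * (\<Prod>i<m. 1 + (z * t) * t ^ i)"
    unfolding prod.lessThan_Suc_shift by (simp add: mult_ac)
  also have "\<dots> = (1 + z) * (\<Sum>k\<le>m. a k)"
    by (simp add: Suc.IH a_def)
  finally have lhs: "(\<Prod>i<Suc m. 1 + z * t ^ i) = (1 + z) * (\<Sum>k\<le>m. a k)" .
  have a_Suc: "a (Suc k) = t ^ Suc k * qbinom t m (Suc k) * t ^ (Suc k choose 2) * z ^ Suc k" for k
    by (simp add: a_def Suc_choose_two power_mult_distrib power_add mult_ac)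
  have "(\<Sum>k\<le>m. a k) = (\<Sum>k\<le>Suc m. a k)"
    by (simp add: a_def qbinom_eq_0)
  also have "\<dots> = 1 + (\<Sum>k\<le>m. a (Suc k))"
    unfolding sum.atMost_Suc_shift by (simp add: a_def numeral_2_eq_2)
  finally have shifted: "(\<Sum>k\<le>m. t ^ Suc k * qbinom t m (Suc k) * t ^ (Suc k choose 2) * z ^ Suc k)
                         = (\<Sum>k\<le>m. a k) - 1"
    by (simp add: a_Suc)
  have unshifted: "(\<Sum>k\<le>m. qbinom t m k * t ^ (Suc k choose 2) * z ^ Suc k) = z * (\<Sum>k\<le>m. a k)"
    by (simp add: sum_distrib_left a_def Suc_choose_two power_mult_distrib power_add mult_ac)
  have "(\<Sum>k\<le>Suc m. qbinom t (Suc m) k * t ^ (k choose 2) * z ^ k)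
        = 1 + (\<Sum>k\<le>m. qbinom t m k * t ^ (Suc k choose 2) * z ^ Suc k)
            + (\<Sum>k\<le>m. t ^ Suc k * qbinom t m (Suc k) * t ^ (Suc k choose 2) * z ^ Suc k)"
    by (simp add: sum.atMost_Suc_shift algebra_simps sum.distrib numeral_2_eq_2 del: sum.atMost_Suc)
  also have "\<dots> = (1 + z) * (\<Sum>k\<le>m. a k)"
    unfolding shifted unshifted by (simp add: algebra_simps)
  finally show ?case using lhs by simp
qed

lemma norm_qbinom_le: "norm (qbinom (t::'a::real_normed_field) m k) \<le> qbinom (norm t) m k"
proof (induction m arbitrary: k)
  case 0 then show ?case by (cases k) auto
next
  case (Suc m)
  show ?case
  proof (cases k)
    case 0 then show ?thesis by simp
  next
    case (Suc j)
    have "norm (qbinom t (Suc m) k) \<le> norm (qbinom t m j) + norm t ^ Suc j * norm (qbinom t m (Suc j))"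
      using norm_triangle_ineq[of "qbinom t m j" "t ^ Suc j * qbinom t m (Suc j)"]
      by (simp add: Suc norm_mult norm_power del: power_Suc)
    also have "\<dots> \<le> qbinom (norm t) m j + norm t ^ Suc j * qbinom (norm t) m (Suc j)"
      by (intro add_mono mult_left_mono Suc.IH) auto
    finally show ?thesis by (simp add: Suc)
  qed
qed

definition qpoch_inf :: "'a::{real_normed_field,banach} \<Rightarrow> 'a" where
  "qpoch_inf t = prodinf (\<lambda>i. 1 - t ^ Suc i)"

lemma one_minus_power_nonzero:
  fixes t :: "'a::real_normed_field"
  assumes "norm t < 1" "n > 0"
  shows "1 - t ^ n \<noteq> 0"
proof
  assume "1 - t ^ n = 0"
  then have "norm (t ^ n) = 1" by simp
  moreover have "norm (t ^ n) < 1"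
    using assms by (simp add: norm_power power_less_one_iff)
  ultimately show False by simp
qed

lemma qpoch_nonzero:
  fixes t :: "'a::real_normed_field"
  assumes "norm t < 1"
  shows "qpoch t n \<noteq> 0"
  using one_minus_power_nonzero[OF assms zero_less_Suc] by (simp add: qpoch_def)

lemma qpoch_LIMSEQ:
  fixes t :: "'a::{real_normed_field,banach}"
  assumes t: "norm t < 1"
  shows "qpoch t \<longlonglongrightarrow> qpoch_inf t" "qpoch_inf t \<noteq> 0"
proof -
  have "summable (\<lambda>i. norm t * norm t ^ i)"
    using t by (intro summable_mult summable_geometric) simp
  then have sum: "summable (\<lambda>i. norm ((1 - t ^ Suc i) - 1))"
    by (simp add: norm_power norm_mult)
  note lim = LIMSEQ_prod_lessThan_prodinf[OF sum one_minus_power_nonzero[OF t zero_less_Suc]]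
  show "qpoch t \<longlonglongrightarrow> qpoch_inf t" "qpoch_inf t \<noteq> 0"
    using lim unfolding qpoch_inf_def qpoch_def[abs_def] by simp_all
qed

lemma qbinom_eq_qpoch_div:
  fixes t :: "'a::real_normed_field"
  assumes "norm t < 1" "k \<le> m"
  shows "qbinom t m k = qpoch t m / (qpoch t k * qpoch t (m - k))"
  using qbinom_mult_qpoch[OF assms(2), of t] qpoch_nonzero[OF assms(1)] by (simp add: field_simps)

lemma qbinom_symmetric:
  fixes t :: "'a::real_normed_field"
  assumes "norm t < 1" "k \<le> m"
  shows "qbinom t m (m - k) = qbinom t m k"
  using qbinom_eq_qpoch_div[OF assms] qbinom_eq_qpoch_div[OF assms(1), of "m - k" m] assms(2)
  by (simp add: mult.commute)

lemma qpoch_real_bounds: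
  fixes r :: real
  assumes r: "0 \<le> r" "r < 1"
  shows "0 < qpoch r n" "qpoch r n \<le> 1" "0 < qpoch_inf r" "qpoch_inf r \<le> qpoch r n"
proof -
  have factor: "0 < 1 - r ^ Suc i" "1 - r ^ Suc i \<le> 1" for i
    using r by (simp_all add: power_less_one_iff del: power_Suc)
  show pos: "0 < qpoch r n" for n
    unfolding qpoch_def using factor by (intro prod_pos) auto
  show "qpoch r n \<le> 1"
    unfolding qpoch_def using factor by (intro prod_le_1) (auto intro: less_imp_le)
  have lim: "qpoch r \<longlonglongrightarrow> qpoch_inf r" "qpoch_inf r \<noteq> 0"
    using qpoch_LIMSEQ[of r] r by simp_all
  have "decseq (qpoch r)"
    using pos factor by (intro decseq_SucI) (simp add: qpoch_Suc mult_left_le)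
  then show "qpoch_inf r \<le> qpoch r n"
    using lim(1) by (rule decseq_ge)
  have "0 \<le> qpoch_inf r"
    using lim(1) pos by (intro LIMSEQ_le_const) (auto intro: less_imp_le)
  with lim(2) show "0 < qpoch_inf r" by simp
qed

lemma norm_qbinom_bounded:
  fixes t :: complex
  assumes t: "norm t < 1"
  shows "norm (qbinom t m k) \<le> 1 / qpoch_inf (norm t) ^ 2"
proof -
  define r where "r = norm t"
  have r: "0 \<le> r" "r < 1" using t by (simp_all add: r_def)
  note bounds = qpoch_real_bounds[OF r]
  have "qbinom r m k \<le> 1 / qpoch_inf r ^ 2"
  proof (cases "k \<le> m")
    case True
    have "qbinom r m k = qpoch r m / (qpoch r k * qpoch r (m - k))"
      using qbinom_eq_qpoch_div[of r k m] r True by simp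
    also have "\<dots> \<le> 1 / (qpoch r k * qpoch r (m - k))"
      using bounds by (intro divide_right_mono) (auto intro: less_imp_le)
    also have "\<dots> \<le> 1 / (qpoch_inf r * qpoch_inf r)"
      using bounds by (intro divide_left_mono mult_mono) (auto intro: mult_pos_pos less_imp_le)
    finally show ?thesis by (simp add: power2_eq_square)
  next
    case False then show ?thesis by (simp add: qbinom_eq_0)
  qed
  then show ?thesis using norm_qbinom_le[of t m k] by (simp add: r_def)
qed

lemma qbinom_central_LIMSEQ:
  fixes t :: complex
  assumes t: "norm t < 1"
  shows "(\<lambda>n. qbinom t (2*n) (n + c)) \<longlonglongrightarrow> 1 / qpoch_inf t"
proof -
  note lim = qpoch_LIMSEQ[OF t]
  have "strict_mono (\<lambda>n::nat. 2*n)" by (simp add: strict_mono_def)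
  then have double: "(\<lambda>n. qpoch t (2*n)) \<longlonglongrightarrow> qpoch_inf t"
    by (rule filterlim_compose[OF lim(1) filterlim_subseq])
  have plus: "(\<lambda>n. qpoch t (n + c)) \<longlonglongrightarrow> qpoch_inf t"
    by (rule LIMSEQ_ignore_initial_segment[OF lim(1)])
  have minus: "(\<lambda>n. qpoch t (n - c)) \<longlonglongrightarrow> qpoch_inf t"
    by (rule filterlim_compose[OF lim(1) filterlim_minus_const_nat_at_top])
  have "(\<lambda>n. qpoch t (2*n) / (qpoch t (n + c) * qpoch t (n - c))) \<longlonglongrightarrow> qpoch_inf t / (qpoch_inf t * qpoch_inf t)"
    using lim(2) by (intro tendsto_divide tendsto_mult double plus minus) auto
  moreover have "eventually (\<lambda>n. qpoch t (2*n) / (qpoch t (n + c) * qpoch t (n - c)) = qbinom t (2*n) (n + c)) sequentially"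
    using eventually_ge_at_top[of c]
    by eventually_elim (simp add: qbinom_eq_qpoch_div[OF t] mult_2)
  ultimately show ?thesis
    using lim(2) by (simp add: tendsto_cong)
qed

section \<open>The Jacobi triple product for the theta series\<close>

definition theta_series :: "complex \<Rightarrow> complex" where
  "theta_series q = 1 + 2 * (\<Sum>\<nu>. q ^ ((Suc \<nu>)^2))"

definition qpoch_odd :: "complex \<Rightarrow> nat \<Rightarrow> complex" where
  "qpoch_odd q n = (\<Prod>i<n. 1 + q ^ (2*i+1))"

lemma prod_odd_powers: "(\<Prod>i<n. (q::'a::comm_monoid_mult) ^ (2*i+1)) = q ^ (n^2)"
proof (induction n)
  case (Suc n)
  have "Suc n ^ 2 = n^2 + (2*n+1)" by (simp add: power2_eq_square)
  with Suc show ?case by (simp add: power_add mult_ac)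
qed simp

lemma finite_theta_exponent:
  assumes "n \<ge> 1"
  shows "(max k n - min k n)^2 + (2*n-1)*k = n^2 + 2 * (k choose 2)"
proof -
  have "even (k * (k - 1))" by (cases k) simp_all
  then have "2 * (k choose 2) = k * (k - 1)" by (simp add: choose_two)
  moreover have "(max k n - min k n)^2 + (2*n-1)*k = n^2 + k * (k - 1)"
  proof (cases "k \<le> n")
    case True
    then obtain d where "n = k + d" using le_Suc_ex by blast
    then show ?thesis using True by (cases k) (simp_all add: algebra_simps power2_eq_square)
  next
    case False
    then obtain d where "k = n + Suc d" by (metis add_Suc_right less_imp_Suc_add not_le)
    then show ?thesis using assms False by (cases n) (simp_all add: algebra_simps power2_eq_square)
  qed
  ultimately show ?thesis by simp
qed

lemma qpoch_odd_shifted: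
  fixes q w :: complex
  assumes n: "n \<ge> 1" and w: "w * q ^ (2*n-1) = 1"
  shows "(\<Prod>i<n. 1 + w * (q^2) ^ (n + i)) = qpoch_odd q n"
  unfolding qpoch_odd_def
proof (rule prod.cong[OF refl])
  fix i
  have e: "2 * (n + i) = (2*n-1) + (2*i+1)" using n by simp
  have "(q^2) ^ (n + i) = q ^ ((2*n-1) + (2*i+1))"
    by (simp only: power_mult[symmetric] e)
  then have "(q^2) ^ (n + i) = q ^ (2*n-1) * q ^ (2*i+1)"
    by (simp only: power_add)
  then show "1 + w * (q^2) ^ (n + i) = 1 + q ^ (2*i+1)"
    by (metis mult.assoc mult_1_left w)
qed

lemma qpoch_odd_reflected:
  fixes q w :: complex
  assumes q: "q \<noteq> 0" and w: "w * q ^ (2*n-1) = 1"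
  shows "q ^ (n^2) * (\<Prod>i<n. 1 + w * (q^2) ^ i) = qpoch_odd q n"
proof -
  have "(\<Prod>i<n. 1 + w * (q^2) ^ i) = (\<Prod>i<n. 1 + w * (q^2) ^ (n - Suc i))"
    by (rule prod.nat_diff_reindex[symmetric])
  also have "\<dots> = (\<Prod>i<n. 1 + inverse (q ^ (2*i+1)))"
  proof (rule prod.cong[OF refl])
    fix i assume "i \<in> {..<n}"
    then have e: "2*n-1 = 2 * (n - Suc i) + (2*i+1)" by simp
    have "q ^ (2*n-1) = (q^2) ^ (n - Suc i) * q ^ (2*i+1)"
      by (simp only: power_mult[symmetric] e power_add)
    then have "w * (q^2) ^ (n - Suc i) * q ^ (2*i+1) = 1"
      by (metis mult.assoc w)
    then show "1 + w * (q^2) ^ (n - Suc i) = 1 + inverse (q ^ (2*i+1))"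
      using q by (simp add: field_simps)
  qed
  finally have "q ^ (n^2) * (\<Prod>i<n. 1 + w * (q^2) ^ i)
                = (\<Prod>i<n. q ^ (2*i+1)) * (\<Prod>i<n. 1 + inverse (q ^ (2*i+1)))"
    by (simp only: prod_odd_powers)
  also have "\<dots> = (\<Prod>i<n. q ^ (2*i+1) * (1 + inverse (q ^ (2*i+1))))"
    by (rule prod.distrib[symmetric])
  also have "\<dots> = qpoch_odd q n"
    unfolding qpoch_odd_def using q by (intro prod.cong) (auto simp: field_simps)
  finally show ?thesis .
qed

text \<open>Cauchy's binomial theorem at z = q^(1-2n), i.e. a finite form of the Jacobi triple product.\<close>

lemma qpoch_odd_square:
  fixes q :: complex
  assumes q: "q \<noteq> 0"
  shows "qpoch_odd q n ^ 2 = (\<Sum>k\<le>2*n. qbinom (q^2) (2*n) k * q ^ ((max k n - min k n)^2))"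
proof (cases "n = 0")
  case True then show ?thesis by (simp add: qpoch_odd_def)
next
  case False
  then have n: "n \<ge> 1" by simp
  define w where "w = inverse q ^ (2*n-1)"
  have w: "w * q ^ (2*n-1) = 1"
    using q by (simp add: w_def power_inverse)
  have "q ^ (n^2) * (\<Prod>i<2*n. 1 + w * (q^2) ^ i)
        = (q ^ (n^2) * (\<Prod>i<n. 1 + w * (q^2) ^ i)) * (\<Prod>i<n. 1 + w * (q^2) ^ (n + i))"
    by (simp only: mult_2 prod.lessThan_add mult.assoc)
  also have "\<dots> = qpoch_odd q n * qpoch_odd q n"
    by (simp only: qpoch_odd_shifted[OF n w] qpoch_odd_reflected[OF q w])
  finally have "qpoch_odd q n ^ 2 = q ^ (n^2) * (\<Prod>i<2*n. 1 + w * (q^2) ^ i)"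
    by (simp only: power2_eq_square[of "qpoch_odd q n"])
  also have "\<dots> = (\<Sum>k\<le>2*n. qbinom (q^2) (2*n) k * (q ^ (n^2) * (q^2) ^ (k choose 2) * w ^ k))"
    by (simp add: cauchy_binomial sum_distrib_left mult_ac)
  also have "\<dots> = (\<Sum>k\<le>2*n. qbinom (q^2) (2*n) k * q ^ ((max k n - min k n)^2))"
  proof (rule sum.cong[OF refl])
    fix k
    have "q ^ (n^2) * (q^2) ^ (k choose 2) * w ^ k
          = q ^ ((max k n - min k n)^2) * (w * q ^ (2*n-1)) ^ k"
      using finite_theta_exponent[OF n, of k]
      by (simp add: power_mult_distrib mult_ac add_ac flip: power_mult power_add)
    then show "qbinom (q^2) (2*n) k * (q ^ (n^2) * (q^2) ^ (k choose 2) * w ^ k)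
               = qbinom (q^2) (2*n) k * q ^ ((max k n - min k n)^2)"
      by (simp only: w power_one mult_1_right)
  qed
  finally show ?thesis .
qed

lemma finite_theta_sum_fold:
  fixes q :: complex
  assumes q: "norm q < 1"
  shows "(\<Sum>k\<le>2*n. qbinom (q^2) (2*n) k * q ^ ((max k n - min k n)^2))
         = qbinom (q^2) (2*n) n + 2 * (\<Sum>\<nu><n. qbinom (q^2) (2*n) (n + Suc \<nu>) * q ^ ((Suc \<nu>)^2))"
proof -
  define f where "f k = qbinom (q^2) (2*n) k * q ^ ((max k n - min k n)^2)" for k
  have t: "norm (q^2) < 1" using q by (simp add: norm_power power_less_one_iff)
  have mirror: "f (n - Suc \<nu>) = f (n + Suc \<nu>)" if "\<nu> < n" for \<nu>
  proof -
    have "qbinom (q^2) (2*n) (2*n - (n + Suc \<nu>)) = qbinom (q^2) (2*n) (n + Suc \<nu>)"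
      using that by (intro qbinom_symmetric[OF t]) simp
    moreover have "2*n - (n + Suc \<nu>) = n - Suc \<nu>" by simp
    ultimately show ?thesis using that by (simp add: f_def)
  qed
  have "(\<Sum>k\<le>2*n. f k) = (\<Sum>k<n + Suc n. f k)"
    by (rule sum.cong) auto
  also have "\<dots> = (\<Sum>k<n. f k) + (f n + (\<Sum>\<nu><n. f (n + Suc \<nu>)))"
    unfolding sum.lessThan_add sum.lessThan_Suc_shift by simp
  also have "(\<Sum>k<n. f k) = (\<Sum>\<nu><n. f (n + Suc \<nu>))"
    using mirror by (simp add: sum.nat_diff_reindex[symmetric, of f])
  finally show ?thesis
    by (simp add: f_def)
qed

lemma summable_power_squares:
  fixes q :: complex
  assumes q: "norm q < 1"
  shows "summable (\<lambda>\<nu>. norm q ^ ((Suc \<nu>)^2))"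
proof (rule summable_comparison_test[OF _ summable_geometric[of "norm q"]])
  have "norm q ^ ((Suc n)^2) \<le> norm q ^ n" for n
    using q by (intro power_decreasing) (auto simp: power2_eq_square)
  then show "\<exists>N. \<forall>n\<ge>N. norm (norm q ^ (Suc n)\<^sup>2) \<le> norm q ^ n"
    by simp
qed (use q in simp)

lemma finite_theta_sum_LIMSEQ:
  fixes q :: complex
  assumes q: "norm q < 1"
  shows "(\<lambda>n. \<Sum>k\<le>2*n. qbinom (q^2) (2*n) k * q ^ ((max k n - min k n)^2))
         \<longlonglongrightarrow> theta_series q / qpoch_inf (q^2)"
proof -
  define t where "t = q^2"
  have t: "norm t < 1" using q by (simp add: t_def norm_power power_less_one_iff)
  define a where "a \<nu> n = (if \<nu> < n then qbinom t (2*n) (n + Suc \<nu>) * q ^ ((Suc \<nu>)^2) else 0)" for \<nu> n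
  define B where "B = 1 / qpoch_inf (norm t) ^ 2"
  have lim_a: "(\<lambda>n. a \<nu> n) \<longlonglongrightarrow> q ^ ((Suc \<nu>)^2) / qpoch_inf t" for \<nu>
  proof -
    have "(\<lambda>n. qbinom t (2*n) (n + Suc \<nu>) * q ^ ((Suc \<nu>)^2)) \<longlonglongrightarrow> 1 / qpoch_inf t * q ^ ((Suc \<nu>)^2)"
      by (intro tendsto_mult qbinom_central_LIMSEQ[OF t] tendsto_const)
    moreover have "eventually (\<lambda>n. qbinom t (2*n) (n + Suc \<nu>) * q ^ ((Suc \<nu>)^2) = a \<nu> n) sequentially"
      using eventually_gt_at_top[of \<nu>] by eventually_elim (simp add: a_def)
    ultimately show ?thesis by (simp add: tendsto_cong)
  qed
  have bound: "eventually (\<lambda>(\<nu>,n). norm (a \<nu> n) \<le> B * norm q ^ ((Suc \<nu>)^2)) (at_top \<times>\<^sub>F sequentially)"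
  proof (rule always_eventually, safe)
    fix \<nu> n
    have "norm (qbinom t (2*n) (n + Suc \<nu>)) \<le> B"
      unfolding B_def by (rule norm_qbinom_bounded[OF t])
    then have "norm (qbinom t (2*n) (n + Suc \<nu>) * q ^ ((Suc \<nu>)^2)) \<le> B * norm q ^ ((Suc \<nu>)^2)"
      by (simp add: norm_mult norm_power mult_right_mono)
    moreover have "0 \<le> B" by (simp add: B_def)
    ultimately show "norm (a \<nu> n) \<le> B * norm q ^ ((Suc \<nu>)^2)"
      by (simp add: a_def)
  qed
  have "(\<lambda>n. suminf (\<lambda>\<nu>. a \<nu> n)) \<longlonglongrightarrow> (\<Sum>\<nu>. q ^ ((Suc \<nu>)^2) / qpoch_inf t)"
    using tannerys_theorem[OF lim_a bound summable_mult[OF summable_power_squares[OF q]]] by simp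
  moreover have "suminf (\<lambda>\<nu>. a \<nu> n) = (\<Sum>\<nu><n. qbinom t (2*n) (n + Suc \<nu>) * q ^ ((Suc \<nu>)^2))" for n
    by (subst suminf_finite[of "{..<n}"]) (auto simp: a_def)
  moreover have "(\<Sum>\<nu>. q ^ ((Suc \<nu>)^2) / qpoch_inf t) = (\<Sum>\<nu>. q ^ ((Suc \<nu>)^2)) / qpoch_inf t"
    by (rule suminf_divide[OF summable_norm_cancel]) (simp add: norm_power summable_power_squares[OF q])
  ultimately have "(\<lambda>n. qbinom t (2*n) n + 2 * (\<Sum>\<nu><n. qbinom t (2*n) (n + Suc \<nu>) * q ^ ((Suc \<nu>)^2)))
                   \<longlonglongrightarrow> 1 / qpoch_inf t + 2 * ((\<Sum>\<nu>. q ^ ((Suc \<nu>)^2)) / qpoch_inf t)"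
    using qbinom_central_LIMSEQ[OF t, of 0] by (intro tendsto_add tendsto_mult tendsto_const) simp_all
  then show ?thesis
    by (simp add: finite_theta_sum_fold[OF q] theta_series_def add_divide_distrib t_def)
qed

definition jacobi_factor :: "nat \<Rightarrow> complex \<Rightarrow> complex" where
  "jacobi_factor k w = (if even k then 1 - w else (1 + w)^2)"

definition jacobi_partial_prod :: "nat \<Rightarrow> complex \<Rightarrow> complex" where
  "jacobi_partial_prod N y = (\<Prod>k\<in>{1..2*N}. jacobi_factor k (y ^ k))"

lemma jacobi_partial_prod_eq: "jacobi_partial_prod N y = qpoch (y^2) N * qpoch_odd y N ^ 2"
proof (induction N)
  case 0 then show ?case by (simp add: jacobi_partial_prod_def qpoch_def qpoch_odd_def)
next
  case (Suc N)
  have "{1..2 * Suc N} = insert (Suc (Suc (2*N))) (insert (Suc (2*N)) {1..2*N})"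
    by (simp add: atLeastAtMostSuc_conv)
  then have split: "jacobi_partial_prod (Suc N) y = jacobi_partial_prod N y
      * (jacobi_factor (Suc (2*N)) (y ^ Suc (2*N)) * jacobi_factor (Suc (Suc (2*N))) (y ^ Suc (Suc (2*N))))"
    unfolding jacobi_partial_prod_def by (simp add: mult_ac)
  have odd: "jacobi_factor (Suc (2*N)) (y ^ Suc (2*N)) = (1 + y ^ (2*N+1))^2"
    by (simp add: jacobi_factor_def)
  have "(y^2) ^ Suc N = y ^ Suc (Suc (2*N))"
    by (simp only: power_mult[symmetric]) simp
  then have even: "jacobi_factor (Suc (Suc (2*N))) (y ^ Suc (Suc (2*N))) = 1 - (y^2) ^ Suc N"
    by (simp add: jacobi_factor_def)
  have "qpoch (y^2) (Suc N) * qpoch_odd y (Suc N) ^ 2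
        = (qpoch (y^2) N * qpoch_odd y N ^ 2) * ((1 + y ^ (2*N+1))^2 * (1 - (y^2) ^ Suc N))"
    by (simp add: qpoch_Suc qpoch_odd_def power_mult_distrib)
  then show ?case
    unfolding split odd even Suc.IH by simp
qed

lemma qpoch_odd_LIMSEQ:
  fixes q :: complex
  assumes q: "norm q < 1"
  shows "qpoch_odd q \<longlonglongrightarrow> (\<Prod>i. 1 + q ^ (2*i+1))" "(\<Prod>i. 1 + q ^ (2*i+1)) \<noteq> 0"
proof -
  have "norm q ^ (2*n+1) \<le> norm q ^ n" for n
    using q by (intro power_decreasing) auto
  then have "norm (norm ((1 + q ^ (2*n+1)) - 1)) \<le> norm q ^ n" for n
    by (simp add: norm_power norm_mult)
  then have sum: "summable (\<lambda>i. norm ((1 + q ^ (2*i+1)) - 1))"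
    using q by (intro summable_comparison_test[OF _ summable_geometric[of "norm q"]]) auto
  have nonzero: "1 + q ^ (2*i+1) \<noteq> 0" for i
    using one_minus_power_nonzero[of "- q" "2*i+1"] q by simp
  show "qpoch_odd q \<longlonglongrightarrow> (\<Prod>i. 1 + q ^ (2*i+1))" "(\<Prod>i. 1 + q ^ (2*i+1)) \<noteq> 0"
    using LIMSEQ_prod_lessThan_prodinf[OF sum nonzero] by (simp_all add: qpoch_odd_def[abs_def])
qed

lemma jacobi_triple_product:
  fixes y :: complex
  assumes y: "norm y < 1" "y \<noteq> 0"
  shows "(\<lambda>N. jacobi_partial_prod N y) \<longlonglongrightarrow> theta_series y"
    and "theta_series y = qpoch_inf (y^2) * (\<Prod>i. 1 + y ^ (2*i+1)) ^ 2"
proof -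
  have t: "norm (y^2) < 1" using y by (simp add: norm_power power_less_one_iff)
  have "(\<lambda>N. qpoch (y^2) N * qpoch_odd y N ^ 2) \<longlonglongrightarrow> qpoch_inf (y^2) * (theta_series y / qpoch_inf (y^2))"
    unfolding qpoch_odd_square[OF y(2)] by (intro tendsto_mult qpoch_LIMSEQ(1)[OF t] finite_theta_sum_LIMSEQ[OF y(1)])
  then show lim: "(\<lambda>N. jacobi_partial_prod N y) \<longlonglongrightarrow> theta_series y"
    using qpoch_LIMSEQ(2)[OF t] by (simp add: jacobi_partial_prod_eq)
  have "(\<lambda>N. jacobi_partial_prod N y) \<longlonglongrightarrow> qpoch_inf (y^2) * (\<Prod>i. 1 + y ^ (2*i+1)) ^ 2"
    unfolding jacobi_partial_prod_eq by (intro tendsto_mult tendsto_power qpoch_LIMSEQ(1)[OF t] qpoch_odd_LIMSEQ(1)[OF y(1)])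
  with lim show "theta_series y = qpoch_inf (y^2) * (\<Prod>i. 1 + y ^ (2*i+1)) ^ 2"
    by (rule LIMSEQ_unique)
qed

lemma theta_series_nonzero:
  assumes "norm y < 1" "y \<noteq> 0"
  shows "theta_series y \<noteq> 0"
proof -
  have "norm (y^2) < 1" using assms by (simp add: norm_power power_less_one_iff)
  then show ?thesis
    using jacobi_triple_product(2)[OF assms] qpoch_LIMSEQ(2) qpoch_odd_LIMSEQ(2)[OF assms(1)] by simp
qed

section \<open>The level p relation\<close>

lemma jacobi_factor_odd_mult: "odd p \<Longrightarrow> jacobi_factor (p * k) = jacobi_factor k"
  by (simp add: jacobi_factor_def fun_eq_iff)

lemma prod_jacobi_factor_root_unity_coprime:
  assumes p: "prime p" "odd p" and k: "\<not> p dvd k"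
  shows "(\<Prod>u<p. jacobi_factor k ((root_unity p ^ u * x) ^ k)) = jacobi_factor k (x ^ (p * k))"
proof -
  have twist: "(root_unity p ^ u * x) ^ k = (root_unity p ^ k) ^ u * x ^ k" for u
    by (simp add: power_mult_distrib mult.commute flip: power_mult)
  have "x ^ (p * k) = (x ^ k) ^ p"
    by (simp add: mult.commute flip: power_mult)
  then show ?thesis
    using prod_one_minus_root_unity_twist[OF p(1) k] prod_one_plus_root_unity_twist[OF p k]
    by (simp add: jacobi_factor_def twist prod_power_distrib[symmetric])
qed

lemma prod_jacobi_factor_root_unity_dvd:
  assumes p: "prime p" and k: "p dvd k"
  shows "(\<Prod>u<p. jacobi_factor k ((root_unity p ^ u * x) ^ k)) = jacobi_factor k (x ^ k) ^ p"
proof -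
  have "(root_unity p ^ u) ^ k = 1" for u
    using p k by (simp add: root_unity_power_eq_1_iff prime_gt_0_nat flip: power_mult)
  then show ?thesis
    by (simp add: power_mult_distrib)
qed

lemma prod_multiples_atLeastAtMost:
  fixes p N :: nat
  assumes "p > 0"
  shows "(\<Prod>k\<in>{1..p*N} \<inter> {k. p dvd k}. h k) = (\<Prod>m\<in>{1..N}. h (p * m))"
proof -
  have "{1..p*N} \<inter> {k. p dvd k} = (\<lambda>m. p * m) ` {1..N}"
    using assms by (auto elim!: dvdE intro!: image_eqI simp: Suc_le_eq)
  moreover have "inj_on (\<lambda>m. p * m) {1..N}"
    using assms by (auto simp: inj_on_def)
  ultimately show ?thesis
    by (simp add: prod.reindex)
qed

lemma jacobi_partial_prod_level_p:
  assumes p: "prime p" "odd p"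
  shows "(\<Prod>u<p. jacobi_partial_prod (p*N) (root_unity p ^ u * x)) * jacobi_partial_prod N (x^(p*p))
       = jacobi_partial_prod (p*N) (x^p) * jacobi_partial_prod N (x^p) ^ p"
proof -
  define K where "K = {1..2*(p*N)}"
  define D where "D = {k::nat. p dvd k}"
  have p0: "p > 0" using p prime_gt_0_nat by blast
  have K_D: "(\<Prod>k\<in>K \<inter> D. h k) = (\<Prod>m\<in>{1..2*N}. h (p * m))" for h
    using prod_multiples_atLeastAtMost[OF p0, of h "2*N"] by (simp add: K_def D_def mult.left_commute)
  have rest: "(\<Prod>k\<in>K - D. \<Prod>u<p. jacobi_factor k ((root_unity p ^ u * x) ^ k))
            = (\<Prod>k\<in>K - D. jacobi_factor k ((x^p) ^ k))"
    by (intro prod.cong refl) (auto simp: D_def prod_jacobi_factor_root_unity_coprime[OF p] power_mult)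
  have "(\<Prod>u<p. jacobi_partial_prod (p*N) (root_unity p ^ u * x))
      = (\<Prod>k\<in>K. \<Prod>u<p. jacobi_factor k ((root_unity p ^ u * x) ^ k))"
    unfolding jacobi_partial_prod_def K_def by (rule prod.swap)
  also have "\<dots> = (\<Prod>k\<in>K \<inter> D. \<Prod>u<p. jacobi_factor k ((root_unity p ^ u * x) ^ k))
                  * (\<Prod>k\<in>K - D. jacobi_factor k ((x^p) ^ k))"
    unfolding rest[symmetric] by (rule prod.Int_Diff) (simp add: K_def)
  also have "(\<Prod>k\<in>K \<inter> D. \<Prod>u<p. jacobi_factor k ((root_unity p ^ u * x) ^ k))
           = jacobi_partial_prod N (x^p) ^ p"
    unfolding K_D prod_jacobi_factor_root_unity_dvd[OF p(1) dvd_triv_left]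
    by (simp add: jacobi_factor_odd_mult[OF p(2)] jacobi_partial_prod_def prod_power_distrib power_mult)
  finally have lhs: "(\<Prod>u<p. jacobi_partial_prod (p*N) (root_unity p ^ u * x))
      = jacobi_partial_prod N (x^p) ^ p * (\<Prod>k\<in>K - D. jacobi_factor k ((x^p) ^ k))" .
  have "jacobi_partial_prod (p*N) (x^p)
      = (\<Prod>k\<in>K \<inter> D. jacobi_factor k ((x^p) ^ k)) * (\<Prod>k\<in>K - D. jacobi_factor k ((x^p) ^ k))"
    unfolding jacobi_partial_prod_def K_def[symmetric] by (rule prod.Int_Diff) (simp add: K_def)
  also have "(\<Prod>k\<in>K \<inter> D. jacobi_factor k ((x^p) ^ k)) = jacobi_partial_prod N (x^(p*p))"
    unfolding K_D jacobi_factor_odd_mult[OF p(2)] jacobi_partial_prod_def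
    by (simp add: mult_ac flip: power_mult)
  finally show ?thesis
    using lhs by (simp add: mult_ac)
qed

lemma theta_series_level_p:
  assumes p: "prime p" "odd p" and x: "norm x < 1" "x \<noteq> 0"
  shows "(\<Prod>u<p. theta_series (root_unity p ^ u * x)) * theta_series (x^(p*p)) = theta_series (x^p) ^ Suc p"
proof -
  have p0: "p > 0" using p prime_gt_0_nat by blast
  have lim: "(\<lambda>N. jacobi_partial_prod N (x^k)) \<longlonglongrightarrow> theta_series (x^k)" if "k > 0" for k
    using x that by (intro jacobi_triple_product(1)) (simp_all add: norm_power power_less_one_iff)
  have "strict_mono (\<lambda>N. p * N)" using p0 by (simp add: strict_mono_def)
  note subseq = filterlim_compose[OF _ filterlim_subseq[OF this]]
  have "(\<lambda>N. (\<Prod>u<p. jacobi_partial_prod (p*N) (root_unity p ^ u * x)) * jacobi_partial_prod N (x^(p*p)))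
        \<longlonglongrightarrow> (\<Prod>u<p. theta_series (root_unity p ^ u * x)) * theta_series (x^(p*p))"
    using x p0 by (intro tendsto_mult tendsto_prod subseq[OF jacobi_triple_product(1)] lim)
      (simp_all add: norm_mult norm_power)
  moreover have "(\<lambda>N. jacobi_partial_prod (p*N) (x^p) * jacobi_partial_prod N (x^p) ^ p)
        \<longlonglongrightarrow> theta_series (x^p) * theta_series (x^p) ^ p"
    using p0 by (intro tendsto_mult tendsto_power subseq lim)
  ultimately show ?thesis
    by (simp add: jacobi_partial_prod_level_p[OF p] LIMSEQ_unique)
qed

lemma theta3_eq_theta_series: "theta3 \<tau> = theta_series (exp (of_real pi * \<i> * \<tau>))"
proof -
  have "exp (of_real pi * \<i> * of_nat ((Suc \<nu>)^2) * \<tau>) = exp (of_real pi * \<i> * \<tau>) ^ ((Suc \<nu>)^2)" for \<nu>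
    by (simp add: mult_ac flip: exp_of_nat_mult)
  then show ?thesis by (simp add: theta3_def theta_series_def)
qed

lemma norm_exp_pi_i_less_1: "Im \<tau> > 0 \<Longrightarrow> norm (exp (of_real pi * \<i> * \<tau>)) < 1"
  by (simp add: norm_exp_eq_Re)

lemma theta3_nonzero: "Im \<tau> > 0 \<Longrightarrow> theta3 \<tau> \<noteq> 0"
  unfolding theta3_eq_theta_series by (rule theta_series_nonzero) (simp_all add: norm_exp_pi_i_less_1)

lemma theta3_add_even: "theta3 (\<tau> + 2 * of_nat k) = theta3 \<tau>"
proof -
  have "of_real pi * \<i> * (\<tau> + 2 * of_nat k) = of_real pi * \<i> * \<tau> + of_nat k * (2 * of_real pi * \<i>)"
    by (simp add: algebra_simps)
  then have "exp (of_real pi * \<i> * (\<tau> + 2 * of_nat k)) = exp (of_real pi * \<i> * \<tau>)"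
    by (simp only: exp_add exp_of_nat_mult exp_two_pi_i power_one mult_1_right)
  then show ?thesis
    by (simp add: theta3_eq_theta_series)
qed

lemma theta3_level_p:
  assumes p: "prime p" "odd p" and \<tau>: "Im \<tau> > 0"
  shows "theta3 (of_nat p * \<tau>) * (\<Prod>u<p. theta3 ((\<tau> + 2 * of_nat u) / of_nat p)) = theta3 \<tau> ^ Suc p"
proof -
  have p0: "p > 0" using p prime_gt_0_nat by blast
  define x where "x = exp (of_real pi * \<i> * (\<tau> / of_nat p))"
  have x: "norm x < 1" "x \<noteq> 0"
    unfolding x_def using \<tau> p0 by (auto intro!: norm_exp_pi_i_less_1 simp: Im_divide_of_nat)
  have x_pow_p: "exp (of_real pi * \<i> * \<tau>) = x ^ p"
    unfolding x_def using p0 by (simp add: field_simps flip: exp_of_nat_mult)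
  have x_pow_pp: "exp (of_real pi * \<i> * (of_nat p * \<tau>)) = x ^ (p * p)"
    unfolding x_def using p0 by (simp add: field_simps flip: exp_of_nat_mult)
  have "of_real pi * \<i> * ((\<tau> + 2 * of_nat u) / of_nat p)
        = of_nat u * (2 * of_real pi * \<i> / of_nat p) + of_real pi * \<i> * (\<tau> / of_nat p)" for u
    by (simp add: add_divide_distrib algebra_simps)
  then have twist: "exp (of_real pi * \<i> * ((\<tau> + 2 * of_nat u) / of_nat p)) = root_unity p ^ u * x" for u
    unfolding root_unity_def x_def by (simp only: exp_add exp_of_nat_mult)
  show ?thesis
    using theta_series_level_p[OF p x]
    unfolding theta3_eq_theta_series twist x_pow_p x_pow_pp by (simp add: mult.commute)
qed

section \<open>Products over upper triangular matrices of determinant p^l\<close>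

definition theta_coset_prod :: "nat \<Rightarrow> nat \<Rightarrow> complex \<Rightarrow> complex" where
  "theta_coset_prod p j \<sigma> = (\<Prod>v<p^j. theta3 ((\<sigma> + 2 * of_nat v) / of_nat (p^j)))"

text \<open>
  The factor for j and v is \<theta>3 at the image of \<tau> under the matrix ((p^(l-j), 2v), (0, p^j))
  of determinant p^l.
\<close>

definition hecke_theta_prod :: "nat \<Rightarrow> nat \<Rightarrow> complex \<Rightarrow> complex" where
  "hecke_theta_prod p l \<tau> = (\<Prod>j\<le>l. theta_coset_prod p j (of_nat (p^(l-j)) * \<tau>))"

lemma theta_coset_prod_0 [simp]: "theta_coset_prod p 0 \<sigma> = theta3 \<sigma>"
  by (simp add: theta_coset_prod_def)

lemma theta_coset_prod_add_even:
  assumes "p > 0"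
  shows "theta_coset_prod p j (\<sigma> + 2 * of_nat c) = theta_coset_prod p j \<sigma>"
proof -
  define P where "P = p^j"
  have P: "P > 0" using assms by (simp add: P_def)
  define g where "g v = theta3 ((\<sigma> + 2 * of_nat v) / of_nat P)" for v
  have "g (v + P) = g v" for v
  proof -
    have "(\<sigma> + 2 * of_nat (v + P)) / of_nat P = (\<sigma> + 2 * of_nat v) / of_nat P + 2 * of_nat 1"
      using P by (simp add: field_simps)
    then show ?thesis by (simp only: g_def theta3_add_even)
  qed
  then have "(\<Prod>v<P. g (c + v)) = (\<Prod>v<P. g v)"
    by (rule prod_lessThan_shift_periodic)
  then show ?thesis
    by (simp add: theta_coset_prod_def g_def P_def algebra_simps)
qed

lemma prod_theta_coset_prod:
  assumes "p > 0"
  shows "(\<Prod>u<p. theta_coset_prod p j ((\<tau> + 2 * of_nat u) / of_nat p)) = theta_coset_prod p (Suc j) \<tau>"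
proof -
  have "theta_coset_prod p (Suc j) \<tau>
        = (\<Prod>v<p^j. \<Prod>u<p. theta3 ((\<tau> + 2 * of_nat (v * p + u)) / of_nat (p^j * p)))"
    unfolding theta_coset_prod_def power_Suc2 by (rule prod.lessThan_mult)
  also have "\<dots> = (\<Prod>u<p. \<Prod>v<p^j. theta3 ((\<tau> + 2 * of_nat (v * p + u)) / of_nat (p^j * p)))"
    by (rule prod.swap)
  also have "\<dots> = (\<Prod>u<p. theta_coset_prod p j ((\<tau> + 2 * of_nat u) / of_nat p))"
    unfolding theta_coset_prod_def using assms
    by (intro prod.cong refl arg_cong[where f=theta3]) (simp add: field_simps)
  finally show ?thesis ..
qed

text \<open>On the level of matrices this is the Hecke relation T(p) T(p^(m+1)) = T(p^(m+2)) + p T(p^m).\<close>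

lemma hecke_theta_prod_recurrence:
  assumes p: "p > 0"
  shows "hecke_theta_prod p (Suc (Suc m)) \<tau> * hecke_theta_prod p m \<tau> ^ p
         = hecke_theta_prod p (Suc m) (of_nat p * \<tau>)
           * (\<Prod>u<p. hecke_theta_prod p (Suc m) ((\<tau> + 2 * of_nat u) / of_nat p))"
proof -
  define X where "X = (\<Prod>j\<le>Suc m. theta_coset_prod p j (of_nat (p^(Suc (Suc m) - j)) * \<tau>))"
  have scaled: "hecke_theta_prod p (Suc m) (of_nat p * \<tau>) = X"
    unfolding hecke_theta_prod_def X_def
    by (intro prod.cong refl) (simp add: Suc_diff_le mult_ac)
  have top: "hecke_theta_prod p (Suc (Suc m)) \<tau> = X * theta_coset_prod p (Suc (Suc m)) \<tau>"
    unfolding hecke_theta_prod_def X_def by simp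
  have lower: "(\<Prod>u<p. theta_coset_prod p j (of_nat (p^(Suc m - j)) * ((\<tau> + 2 * of_nat u) / of_nat p)))
               = theta_coset_prod p j (of_nat (p^(m - j)) * \<tau>) ^ p" if "j \<le> m" for j
  proof -
    have "of_nat (p^(Suc m - j)) * ((\<tau> + 2 * of_nat u) / of_nat p)
          = of_nat (p^(m - j)) * \<tau> + 2 * of_nat (p^(m - j) * u)" for u
      using that p by (simp add: Suc_diff_le field_simps)
    then show ?thesis
      by (simp only: theta_coset_prod_add_even[OF p] prod_constant card_lessThan)
  qed
  have "(\<Prod>u<p. hecke_theta_prod p (Suc m) ((\<tau> + 2 * of_nat u) / of_nat p))
        = (\<Prod>j\<le>Suc m. \<Prod>u<p. theta_coset_prod p j (of_nat (p^(Suc m - j)) * ((\<tau> + 2 * of_nat u) / of_nat p)))"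
    unfolding hecke_theta_prod_def by (rule prod.swap)
  also have "\<dots> = (\<Prod>j\<le>m. \<Prod>u<p. theta_coset_prod p j (of_nat (p^(Suc m - j)) * ((\<tau> + 2 * of_nat u) / of_nat p)))
                  * theta_coset_prod p (Suc (Suc m)) \<tau>"
    by (simp only: prod.atMost_Suc prod_theta_coset_prod[OF p] diff_self_eq_0 power_0 of_nat_1 mult_1)
  also have "(\<Prod>j\<le>m. \<Prod>u<p. theta_coset_prod p j (of_nat (p^(Suc m - j)) * ((\<tau> + 2 * of_nat u) / of_nat p)))
             = (\<Prod>j\<le>m. theta_coset_prod p j (of_nat (p^(m - j)) * \<tau>) ^ p)"
    by (rule prod.cong[OF refl lower]) simp
  also have "\<dots> = hecke_theta_prod p m \<tau> ^ p"
    by (simp add: hecke_theta_prod_def prod_power_distrib)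
  finally show ?thesis
    unfolding scaled top by (simp add: mult_ac)
qed

lemma hecke_theta_prod_eq_power:
  assumes p: "prime p" "odd p" and \<tau>: "Im \<tau> > 0"
  shows "hecke_theta_prod p n \<tau> = theta3 \<tau> ^ (\<Sum>i\<le>n. p^i)"
  using \<tau>
proof (induction n arbitrary: \<tau> rule: less_induct)
  case (less n)
  have p0: "p > 0" using p prime_gt_0_nat by blast
  have level_p: "theta3 (of_nat p * \<tau>) * (\<Prod>u<p. theta3 ((\<tau> + 2 * of_nat u) / of_nat p)) = theta3 \<tau> ^ Suc p"
    by (rule theta3_level_p[OF p less.prems])
  consider "n = 0" | "n = 1" | m where "n = Suc (Suc m)"
    by (metis One_nat_def not0_implies_Suc)
  then show ?case
  proof cases
    case 1 then show ?thesis by (simp add: hecke_theta_prod_def)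
  next
    case 2 then show ?thesis
      using level_p by (simp add: hecke_theta_prod_def theta_coset_prod_def)
  next
    case 3
    have Im: "Im (of_nat p * \<tau>) > 0" "Im ((\<tau> + 2 * of_nat u) / of_nat p) > 0" for u
      using less.prems p0 by (simp_all add: Im_divide_of_nat)
    have IH: "hecke_theta_prod p (Suc m) \<sigma> = theta3 \<sigma> ^ (\<Sum>i\<le>Suc m. p^i)" if "Im \<sigma> > 0" for \<sigma>
      using less.IH[of "Suc m" \<sigma>] that 3 by simp
    have "hecke_theta_prod p n \<tau> * theta3 \<tau> ^ ((\<Sum>i\<le>m. p^i) * p)
          = (theta3 (of_nat p * \<tau>) * (\<Prod>u<p. theta3 ((\<tau> + 2 * of_nat u) / of_nat p))) ^ (\<Sum>i\<le>Suc m. p^i)"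
      using hecke_theta_prod_recurrence[OF p0, of m \<tau>] less.IH[of m \<tau>] less.prems 3 IH Im
      by (simp add: power_mult power_mult_distrib prod_power_distrib)
    also have "\<dots> = theta3 \<tau> ^ (Suc p * (\<Sum>i\<le>Suc m. p^i))"
      by (simp only: level_p power_mult)
    also have "Suc p * (\<Sum>i\<le>Suc m. p^i) = (\<Sum>i\<le>n. p^i) + (\<Sum>i\<le>m. p^i) * p"
      by (simp add: 3 sum_powers_Suc algebra_simps)
    finally show ?thesis
      using theta3_nonzero[OF less.prems] by (simp add: power_add)
  qed
qed

lemma theta_coset_prod_Suc_mult:
  assumes p: "p > 0"
  shows "theta_coset_prod p (Suc i) (of_nat p * \<sigma>)
         = (\<Prod>v\<in>{v. v < p^Suc i \<and> \<not> p dvd v}. theta3 ((of_nat p * \<sigma> + 2 * of_nat v) / of_nat (p^Suc i)))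
           * theta_coset_prod p i \<sigma>"
proof -
  define g where "g v = theta3 ((of_nat p * \<sigma> + 2 * of_nat v) / of_nat (p^Suc i))" for v
  define M where "M = (\<lambda>w. p * w) ` {..<p^i}"
  have M: "M = {v. v < p^Suc i \<and> p dvd v}"
    using p by (auto simp: M_def elim!: dvdE)
  have "{..<p^Suc i} = {v. v < p^Suc i \<and> \<not> p dvd v} \<union> M"
    by (auto simp: M)
  then have "theta_coset_prod p (Suc i) (of_nat p * \<sigma>) = (\<Prod>v\<in>{v. v < p^Suc i \<and> \<not> p dvd v} \<union> M. g v)"
    unfolding theta_coset_prod_def g_def by simp
  also have "\<dots> = (\<Prod>v\<in>{v. v < p^Suc i \<and> \<not> p dvd v}. g v) * (\<Prod>v\<in>M. g v)"
    by (rule prod.union_disjoint) (auto simp: M)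
  also have "(\<Prod>v\<in>M. g v) = (\<Prod>w<p^i. g (p * w))"
    unfolding M_def using p by (simp add: prod.reindex inj_on_def)
  also have "\<dots> = theta_coset_prod p i \<sigma>"
    unfolding theta_coset_prod_def g_def using p
    by (intro prod.cong refl arg_cong[where f=theta3]) (simp add: field_simps)
  finally show ?thesis by (simp add: g_def)
qed

lemma gcd_prime_powers_eq_1_iff:
  fixes p v :: nat
  assumes "prime p" "a > 0" "b > 0"
  shows "gcd (gcd (p^a) v) (p^b) = 1 \<longleftrightarrow> \<not> p dvd v"
proof
  assume "gcd (gcd (p^a) v) (p^b) = 1"
  moreover have "p dvd p^a" "p dvd p^b" using assms by simp_all
  ultimately show "\<not> p dvd v"
    using assms(1) by (metis gcd_greatest not_prime_1 nat_dvd_1_iff_1)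
next
  assume "\<not> p dvd v"
  with assms(1) have "coprime (p^a) v"
    by (simp add: prime_imp_coprime)
  then show "gcd (gcd (p^a) v) (p^b) = 1" by simp
qed

definition primitive_hecke_theta_prod :: "nat \<Rightarrow> nat \<Rightarrow> complex \<Rightarrow> complex" where
  "primitive_hecke_theta_prod p l \<tau> = (\<Prod>j\<in>{0..l}. \<Prod>v\<in>{v. v < p^j \<and> gcd (gcd (p^(l-j)) v) (p^j) = 1}.
     theta3 ((of_nat (p^(l-j)) * \<tau> + 2 * of_nat v) / of_nat (p^j)))"

lemma primitive_hecke_theta_prod_1: "primitive_hecke_theta_prod p 1 \<tau> = hecke_theta_prod p 1 \<tau>"
  by (simp add: primitive_hecke_theta_prod_def hecke_theta_prod_def theta_coset_prod_def
      atLeast0AtMost lessThan_def)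

lemma theta_coset_prod_eq_primitive_mult:
  assumes p: "prime p" and j: "0 < j" "j < l"
  shows "theta_coset_prod p j (of_nat (p^(l-j)) * \<tau>)
         = (\<Prod>v\<in>{v. v < p^j \<and> gcd (gcd (p^(l-j)) v) (p^j) = 1}.
              theta3 ((of_nat (p^(l-j)) * \<tau> + 2 * of_nat v) / of_nat (p^j)))
           * theta_coset_prod p (j - 1) (of_nat (p^(l - Suc j)) * \<tau>)"
proof -
  obtain i where i: "j = Suc i" using j by (cases j) auto
  have "l - j = Suc (l - Suc j)" using j by (simp add: Suc_diff_Suc)
  then have scale: "of_nat (p^(l-j)) * \<tau> = of_nat p * (of_nat (p^(l - Suc j)) * \<tau>)"
    by simp
  have "gcd (gcd (p^(l-j)) v) (p^j) = 1 \<longleftrightarrow> \<not> p dvd v" for v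
    using j by (intro gcd_prime_powers_eq_1_iff p) auto
  then have coprime: "{v. v < p^j \<and> gcd (gcd (p^(l-j)) v) (p^j) = 1} = {v. v < p^j \<and> \<not> p dvd v}"
    by (simp only:)
  show ?thesis
    unfolding coprime scale
    by (simp only: i theta_coset_prod_Suc_mult[OF prime_gt_0_nat[OF p]] diff_Suc_1)
qed

text \<open>The non-primitive matrices of determinant p^(m+2) are p times those of determinant p^m.\<close>

lemma primitive_hecke_theta_prod_mult:
  assumes p: "prime p"
  shows "primitive_hecke_theta_prod p (Suc (Suc m)) \<tau> * hecke_theta_prod p m \<tau>
         = hecke_theta_prod p (Suc (Suc m)) \<tau>"
proof -
  define l where "l = Suc (Suc m)"
  define prim where "prim j = (\<Prod>v\<in>{v. v < p^j \<and> gcd (gcd (p^(l-j)) v) (p^j) = 1}.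
     theta3 ((of_nat (p^(l-j)) * \<tau> + 2 * of_nat v) / of_nat (p^j)))" for j
  define R where "R j = (if 0 < j \<and> j < l then theta_coset_prod p (j - 1) (of_nat (p^(l - Suc j)) * \<tau>) else 1)" for j
  have factor: "theta_coset_prod p j (of_nat (p^(l-j)) * \<tau>) = prim j * R j" if "j \<le> l" for j
  proof (cases "0 < j \<and> j < l")
    case True
    then show ?thesis
      unfolding prim_def R_def using theta_coset_prod_eq_primitive_mult[OF p] by simp
  next
    case False
    with that have "j = 0 \<or> j = l" by auto
    then show ?thesis
      using False by (auto simp: prim_def R_def theta_coset_prod_def lessThan_def)
  qed
  have "hecke_theta_prod p l \<tau> = (\<Prod>j\<le>l. prim j) * (\<Prod>j\<le>l. R j)"
    unfolding hecke_theta_prod_def prod.distrib[symmetric] by (rule prod.cong[OF refl factor]) simp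
  also have "(\<Prod>j\<le>l. prim j) = primitive_hecke_theta_prod p l \<tau>"
    by (simp add: primitive_hecke_theta_prod_def prim_def atLeast0AtMost)
  also have "(\<Prod>j\<le>l. R j) = R 0 * ((\<Prod>i\<le>m. R (Suc i)) * R (Suc (Suc m)))"
    unfolding l_def prod.atMost_Suc_shift[of R "Suc m"] prod.atMost_Suc[of "\<lambda>i. R (Suc i)" m] ..
  also have "\<dots> = (\<Prod>i\<le>m. R (Suc i))"
    by (simp add: R_def l_def)
  also have "\<dots> = hecke_theta_prod p m \<tau>"
    unfolding hecke_theta_prod_def by (intro prod.cong refl) (auto simp: R_def l_def Suc_diff_le)
  finally show ?thesis
    by (simp add: l_def)
qed

lemma dedekind_psi_prime_power:
  assumes p: "prime p" and l: "l \<ge> 1"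
  shows "dedekind_psi (p^l) = p^l + p^(l-1)"
proof -
  have "p^l = p * p^(l-1)"
    using l by (simp add: power_eq_if)
  then have psi: "(of_nat (p^l) :: rat) * (1 + 1 / of_nat p) = of_nat (p^l + p^(l-1))"
    using p prime_gt_0_nat[OF p] by (simp add: field_simps)
  have "prime_factors (p^l) = {p}"
    using p l by (simp add: prime_factorization_prime_power)
  then have "(of_nat (p^l) :: rat) * (\<Prod>q\<in>prime_factors (p^l). 1 + 1 / of_nat q) = of_nat (p^l + p^(l-1))"
    using psi by simp
  then show ?thesis
    unfolding dedekind_psi_def by (simp only: floor_of_nat nat_int)
qed

lemma primitive_hecke_theta_prod_eq_power:
  assumes p: "prime p" "odd p" and l: "l \<ge> 1" and \<tau>: "Im \<tau> > 0"
  shows "primitive_hecke_theta_prod p l \<tau> = theta3 \<tau> ^ (p^l + p^(l-1))"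
proof (cases "l = 1")
  case True
  have "primitive_hecke_theta_prod p 1 \<tau> = theta3 \<tau> ^ (\<Sum>i\<le>1. p^i)"
    by (simp only: primitive_hecke_theta_prod_1 hecke_theta_prod_eq_power[OF p \<tau>])
  with True show ?thesis
    by simp
next
  case False
  with l obtain m where m: "l = Suc (Suc m)"
    by (metis le_Suc_ex add_Suc_shift One_nat_def plus_1_eq_Suc not_less_eq_eq nat.exhaust)
  note power = hecke_theta_prod_eq_power[OF p \<tau>]
  have "primitive_hecke_theta_prod p l \<tau> * theta3 \<tau> ^ (\<Sum>i\<le>m. p^i) = hecke_theta_prod p l \<tau>"
    using primitive_hecke_theta_prod_mult[OF p(1), of m \<tau>] by (simp add: m power)
  also have "\<dots> = theta3 \<tau> ^ ((p^l + p^(l-1)) + (\<Sum>i\<le>m. p^i))"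
    by (simp add: power m add_ac)
  finally have "primitive_hecke_theta_prod p l \<tau> * theta3 \<tau> ^ (\<Sum>i\<le>m. p^i)
                = theta3 \<tau> ^ (p^l + p^(l-1)) * theta3 \<tau> ^ (\<Sum>i\<le>m. p^i)"
    by (simp only: power_add)
  then show ?thesis
    using mult_right_cancel[OF power_not_zero[OF theta3_nonzero[OF \<tau>]]] by blast
qed

theorem lemma2p3:
  fixes p l :: nat and \<tau> :: complex
  assumes "prime p" and "odd p" and "l \<ge> 1" and "Im \<tau> > 0"
  shows "(\<Prod>j\<in>{0..l}. \<Prod>v\<in>{v. v < p^j \<and> gcd (gcd (p^(l-j)) v) (p^j) = 1}.
            theta3 ((of_nat (p^(l-j)) * \<tau> + 2 * of_nat v) / of_nat (p^j)))
         = theta3 \<tau> ^ dedekind_psi (p^l)"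
  using primitive_hecke_theta_prod_eq_power[OF assms]
  unfolding dedekind_psi_prime_power[OF assms(1,3)] primitive_hecke_theta_prod_def .

end
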